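(* Let $n\ge 3$ and let $\mathcal M=\Delta^{n-1}_{>0}=\{q\in\mathbb R^n: q_i>0,\ \sum_i q_i=1\}$ be the open probability simplex with Fisher--Rao metric $g_F(q)[v,w]=\sum_{i=1}^n v_iw_i/q_i$ for $v,w\in T_q\mathcal M=\{v\in\mathbb R^n:\sum_i v_i=0\}$. Let $\widehat V\in\mathrm{End}(\mathbb R^n)$ and decompose $\widehat V=\widehat S+\widehat F$ with $\widehat S^\top=\widehat S$, $\widehat F^\top=-\widehat F$. For any $\widehat W\in\mathrm{End}(\mathbb R^n)$ let $\mathcal T(\widehat W)\in\Omega^1(\mathcal M)$ denote the pullback $\iota^*\big(\bar\alpha^{\widehat W}|_{\mathbb S^{n-1}_+}\big)$, where $\bar\alpha^{\widehat W}$ is the $1$-form on the unit sphere $\mathbb S^{n-1}\subset\mathbb R^n$ given by $\bar\alpha^{\widehat W}_\rho(\eta)=\langle \eta,(I-\rho\rho^\top)\widehat W\rho\rangle$ for $\eta\in T_\rho\mathbb S^{n-1}$, $\mathbb S^{n-1}_+=\{\rho\in\mathbb S^{n-1}:\rho_i>0\ \forall i\}$, and $\iota:\mathcal M\to\mathbb S^{n-1}_+$, $\iota(q)=\sqrt q=(\sqrt{q_1},\dots,\sqrt{q_n})$. Set $\beta=\mathcal T(\widehat V)$, $\beta^{\widehat S}=\mathcal T(\widehat S)$, $\beta^{\widehat F}=\mathcal T(\widehat F)$, so that $\beta=\beta^{\widehat S}+\beta^{\widehat F}$. Then: (1) the smooth function $U(q):=\tfrac12(\sqrt q)^\top\widehat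 S\sqrt q$ on $\mathcal M$ satisfies $\beta^{\widehat S}=dU$; (2) there exists $\gamma\in\Omega^2(\mathcal M)$ such that $\beta^{\widehat F}=\delta_{g_F}\gamma$, where $\delta_{g_F}$ is the codifferential of $g_F$. Consequently $\beta=dU+\delta_{g_F}\gamma$.
   Context: $\langle\cdot,\cdot\rangle$ is the Euclidean inner product on $\mathbb R^n$. The sphere $\mathbb S^{n-1}$ carries the round metric induced by $\langle\cdot,\cdot\rangle$. *)

theory Defs
  imports "HOL-Analysis.Analysis"
begin

fun Ck_on :: "nat \<Rightarrow> 'a::euclidean_space set \<Rightarrow> ('a \<Rightarrow> real) \<Rightarrow> bool" where
  "Ck_on 0 S f = continuous_on S f"
| "Ck_on (Suc k) S f =
     (f differentiable_on S \<and>
      (\<forall>i\<in>Basis. Ck_on k S (\<lambda>x. frechet_derivative f (at x) i)))"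

definition smooth_on :: "'a::euclidean_space set \<Rightarrow> ('a \<Rightarrow> real) \<Rightarrow> bool" where
  "smooth_on S f \<longleftrightarrow> (\<forall>k. Ck_on k S f)"

definition prob_simplex :: "(real^'n) set" where
  "prob_simplex = {q. (\<forall>i. 0 < q$i) \<and> sum (\<lambda>i. q$i) UNIV = 1}"

definition tangent_space :: "(real^'n) set" where
  "tangent_space = {v. sum (\<lambda>i. v$i) UNIV = 0}"

definition sqrtv :: "real^'n \<Rightarrow> real^'n" where
  "sqrtv q = (\<chi> i. sqrt (q$i))"

definition alpha_bar :: "real^'n^'n \<Rightarrow> real^'n \<Rightarrow> real^'n \<Rightarrow> real" where
  "alpha_bar W \<rho> \<eta> = \<eta> \<bullet> (W *v \<rho> - (\<rho> \<bullet> (W *v \<rho>)) *\<^sub>R \<rho>)"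

definition pullback_form :: "real^'n^'n \<Rightarrow> real^'n \<Rightarrow> real^'n \<Rightarrow> real" where
  "pullback_form W q v = alpha_bar W (sqrtv q) (frechet_derivative sqrtv (at q) v)"

definition sym_part :: "real^'n^'n \<Rightarrow> real^'n^'n" where
  "sym_part V = (1/2) *\<^sub>R (V + transpose V)"

definition skew_part :: "real^'n^'n \<Rightarrow> real^'n^'n" where
  "skew_part V = (1/2) *\<^sub>R (V - transpose V)"

definition fisher_metric :: "real^'n \<Rightarrow> real^'n \<Rightarrow> real^'n \<Rightarrow> real" where
  "fisher_metric q v w = (\<Sum>i\<in>UNIV. v$i * w$i / q$i)"

section \<open>Global chart of the simplex: R^n = R^('m::finite option), coordinates q_(Some k), k :: 'm\<close>

definition chart :: "real^('m::finite) \<Rightarrow> real^('m::finite option)" where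
  "chart x = (\<chi> j. case j of None \<Rightarrow> 1 - sum (\<lambda>k. x$k) UNIV | Some k \<Rightarrow> x$k)"

definition chart_inv :: "real^('m::finite option) \<Rightarrow> real^('m::finite)" where
  "chart_inv q = (\<chi> k. q $ Some k)"

definition chart_domain :: "(real^('m::finite)) set" where
  "chart_domain = {x. (\<forall>k. 0 < x$k) \<and> sum (\<lambda>k. x$k) UNIV < 1}"

text \<open>Coordinate vector fields d/dx_k = E_(Some k) - E_None.\<close>
definition cbasis :: "'m \<Rightarrow> real^('m::finite option)" where
  "cbasis k = axis (Some k) 1 - axis None 1"

definition metric_coords :: "real^('m::finite) \<Rightarrow> real^('m::finite)^'m" where
  "metric_coords x = (\<chi> a b. fisher_metric (chart x) (cbasis a) (cbasis b))"

text \<open>2-forms on the prob_simplex: at each q an alternating bilinear form (given on R^n,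
  only its restriction to the tangent space matters), smooth in the chart.\<close>
definition form2_coords ::
  "(real^('m::finite option) \<Rightarrow> real^('m::finite option) \<Rightarrow> real^('m::finite option) \<Rightarrow> real) \<Rightarrow> real^('m::finite) \<Rightarrow> real^('m::finite)^'m" where
  "form2_coords \<gamma> x = (\<chi> a b. \<gamma> (chart x) (cbasis a) (cbasis b))"

definition is_2form ::
  "(real^('m::finite option) \<Rightarrow> real^('m::finite option) \<Rightarrow> real^('m::finite option) \<Rightarrow> real) \<Rightarrow> bool" where
  "is_2form \<gamma> \<longleftrightarrow>
     (\<forall>q\<in>prob_simplex. bilinear (\<gamma> q) \<and> (\<forall>v w. \<gamma> q v w = - \<gamma> q w v)) \<and>
     (\<forall>a b. smooth_on chart_domain (\<lambda>x. form2_coords \<gamma> x $ a $ b))"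

text \<open>Codifferential of a 2-form in coordinates:
  (delta gamma)^j = - (1/sqrt(det g)) sum_k d_k( sqrt(det g) gamma^(kj) ),
  (delta gamma)_i = g_ij (delta gamma)^j, with gamma^(kj) = g^(ka) gamma_ab g^(jb).\<close>
definition codiff2_coords ::
  "(real^('m::finite option) \<Rightarrow> real^('m::finite option) \<Rightarrow> real^('m::finite option) \<Rightarrow> real) \<Rightarrow> real^('m::finite) \<Rightarrow> real^('m::finite)" where
  "codiff2_coords \<gamma> x =
     (let vol = (\<lambda>y. sqrt (det (metric_coords y)));
          up = (\<lambda>y. matrix_inv (metric_coords y) ** form2_coords \<gamma> y
                        ** transpose (matrix_inv (metric_coords y)));
          vup = (\<chi> j. - (1 / vol x) *
                   (\<Sum>k\<in>UNIV. frechet_derivative (\<lambda>y. vol y * up y $ k $ j) (at x) (axis k 1)))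
      in metric_coords x *v vup)"

text \<open>The 1-form delta gamma at q, on a tangent vector v = sum_k v_(Some k) cbasis k.\<close>
definition codiff2 ::
  "(real^('m::finite option) \<Rightarrow> real^('m::finite option) \<Rightarrow> real^('m::finite option) \<Rightarrow> real)
     \<Rightarrow> real^('m::finite option) \<Rightarrow> real^('m::finite option) \<Rightarrow> real" where
  "codiff2 \<gamma> q v = (\<Sum>a\<in>UNIV. codiff2_coords \<gamma> (chart_inv q) $ a * v $ Some a)"

end

theory Submission
  imports Defs
begin

text \<open>
  Write r = sqrt q. Since the derivative of the square-root map is D v = v / (2 sqrt q), a tangent vector
  v (with sum v = 0) is mapped to a vector orthogonal to r, so the pulled-back form is simply
  T(W) q v = <D v, W r>. For symmetric S this is the derivative of U = r^T S r / 2.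

  For skew F we write down gamma explicitly in the chart x = (q_1, ..., q_(n-1)), q_0 = 1 - sum x.
  There det g = 1 / prod q_i, and we prescribe the densitised components sqrt(det g) gamma^(kj) as
  P_kj = A_kj L_kj, where A_kj = prod_(i ~: {k,j}) x_i^(-1/2) does not depend on x_k and L_kj is
  linear in sqrt q_0, sqrt x_k, sqrt x_j. The divergence sum_k d_k P_kj can then be computed in closed
  form: it equals -sqrt(det g) sqrt(x_j) (F r)_j / 2, and lowering the index with g gives, using
  r^T F r = 0, exactly the chart components (F r)_a / (2 sqrt q_a) - (F r)_0 / (2 sqrt q_0) of T(F).
\<close>

section \<open>Smooth real functions\<close>

lemma Ck_on_Suc_imp_Ck_on:
  fixes S :: "'a::euclidean_space set"
  shows "Ck_on (Suc k) S f \<Longrightarrow> Ck_on k S f"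
proof (induction k arbitrary: f)
  case 0
  then show ?case by (simp add: differentiable_imp_continuous_on)
qed auto

context
  fixes S :: "'a::euclidean_space set"
  assumes S: "open S"
begin

lemma Ck_on_cong:
  assumes "\<And>x. x \<in> S \<Longrightarrow> f x = g x" "Ck_on k S f"
  shows "Ck_on k S g"
  using assms
proof (induction k arbitrary: f g)
  case 0
  then show ?case using continuous_on_cong by force
next
  case (Suc k)
  have f': "f differentiable_on S" and Df: "\<forall>i\<in>Basis. Ck_on k S (\<lambda>x. frechet_derivative f (at x) i)"
    using Suc.prems(2) by auto
  have f'x: "f differentiable at x" if "x \<in> S" for x
    using f' that S by (simp add: differentiable_on_eq_differentiable_at)
  have g': "g differentiable at x" if "x \<in> S" for x
    using f'x[OF that] S that Suc.prems(1)
    by (meson differentiable_def has_derivative_transform_within_open)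
  have Df_eq: "frechet_derivative f (at x) = frechet_derivative g (at x)" if "x \<in> S" for x
    using frechet_derivative_transform_within_open[OF f'x[OF that] S that] Suc.prems(1) by blast
  have "Ck_on k S (\<lambda>x. frechet_derivative g (at x) i)" if "i \<in> Basis" for i
    by (rule Suc.IH[of "\<lambda>x. frechet_derivative f (at x) i"]) (use Df_eq Df that in auto)
  then show ?case
    using g' S by (auto simp: differentiable_on_eq_differentiable_at)
qed

lemma Ck_on_SucI:
  assumes "\<And>x. x \<in> S \<Longrightarrow> (f has_derivative D x) (at x)"
    and "\<And>i. i \<in> Basis \<Longrightarrow> Ck_on k S (\<lambda>x. D x i)"
  shows "Ck_on (Suc k) S f"
proof -
  have "f differentiable_on S"
    using S assms(1) by (auto simp: differentiable_on_eq_differentiable_at differentiable_def)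
  moreover have "Ck_on k S (\<lambda>x. frechet_derivative f (at x) i)" if "i \<in> Basis" for i
    by (rule Ck_on_cong[OF _ assms(2)[OF that]]) (metis assms(1) frechet_derivative_at)
  ultimately show ?thesis by simp
qed

lemma Ck_on_Suc_has_derivative:
  "Ck_on (Suc k) S f \<Longrightarrow> x \<in> S \<Longrightarrow> (f has_derivative frechet_derivative f (at x)) (at x)"
  using S by (auto simp: differentiable_on_eq_differentiable_at frechet_derivative_works)

lemma Ck_on_const: "Ck_on k S (\<lambda>x. c)"
proof (induction k arbitrary: c)
  case (Suc k)
  show ?case by (rule Ck_on_SucI[where D="\<lambda>x h. 0"]) (auto intro: Suc.IH)
qed simp

lemma Ck_on_bounded_linear: "bounded_linear f \<Longrightarrow> Ck_on k S f"
proof (cases k)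
  case (Suc k')
  assume "bounded_linear f"
  then show ?thesis
    unfolding Suc by (intro Ck_on_SucI[where D="\<lambda>x. f"] Ck_on_const bounded_linear_imp_has_derivative)
qed (simp add: linear_continuous_on)

lemma Ck_on_add: "Ck_on k S f \<Longrightarrow> Ck_on k S g \<Longrightarrow> Ck_on k S (\<lambda>x. f x + g x)"
proof (induction k arbitrary: f g)
  case (Suc k)
  show ?case
    by (rule Ck_on_SucI[where D="\<lambda>x h. frechet_derivative f (at x) h + frechet_derivative g (at x) h"])
       (use Suc in \<open>auto intro!: has_derivative_add Ck_on_Suc_has_derivative\<close>)
qed (simp add: continuous_on_add)

lemma Ck_on_mult: "Ck_on k S f \<Longrightarrow> Ck_on k S g \<Longrightarrow> Ck_on k S (\<lambda>x. f x * g x)"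
proof (induction k arbitrary: f g)
  case (Suc k)
  show ?case
  proof (rule Ck_on_SucI)
    fix x assume "x \<in> S"
    then show "((\<lambda>x. f x * g x) has_derivative
        (\<lambda>h. f x * frechet_derivative g (at x) h + frechet_derivative f (at x) h * g x)) (at x)"
      using Suc.prems by (intro has_derivative_mult Ck_on_Suc_has_derivative)
  next
    fix i :: 'a assume "i \<in> Basis"
    moreover have "Ck_on k S f" "Ck_on k S g"
      using Suc.prems by (auto intro: Ck_on_Suc_imp_Ck_on)
    ultimately show "Ck_on k S (\<lambda>x. f x * frechet_derivative g (at x) i + frechet_derivative f (at x) i * g x)"
      using Suc.prems by (intro Ck_on_add Suc.IH) auto
  qed
qed (simp add: continuous_on_mult)

lemma Ck_on_inverse:
  "Ck_on k S f \<Longrightarrow> (\<And>x. x \<in> S \<Longrightarrow> f x \<noteq> 0) \<Longrightarrow> Ck_on k S (\<lambda>x. inverse (f x))"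
proof (induction k arbitrary: f)
  case (Suc k)
  have "Ck_on k S (\<lambda>x. inverse (f x))"
    using Suc by (blast intro: Ck_on_Suc_imp_Ck_on)
  then have "Ck_on k S (\<lambda>x. inverse (f x) * inverse (f x) * -1)"
    by (intro Ck_on_mult Ck_on_const)
  then have inv2: "Ck_on k S (\<lambda>x. - (inverse (f x) ^ Suc (Suc 0)))"
    by simp
  show ?case
  proof (rule Ck_on_SucI)
    fix x assume "x \<in> S"
    then show "((\<lambda>x. inverse (f x)) has_derivative
        (\<lambda>h. frechet_derivative f (at x) h * - (inverse (f x) ^ Suc (Suc 0)))) (at x)"
      using Suc.prems
      by (intro DERIV_compose_FDERIV DERIV_inverse Ck_on_Suc_has_derivative) auto
  next
    fix i :: 'a assume "i \<in> Basis"
    then show "Ck_on k S (\<lambda>x. frechet_derivative f (at x) i * - (inverse (f x) ^ Suc (Suc 0)))"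
      using Suc.prems by (intro Ck_on_mult inv2) auto
  qed
qed (simp add: continuous_on_inverse)

lemma Ck_on_sqrt:
  "Ck_on k S f \<Longrightarrow> (\<And>x. x \<in> S \<Longrightarrow> 0 < f x) \<Longrightarrow> Ck_on k S (\<lambda>x. sqrt (f x))"
proof (induction k arbitrary: f)
  case (Suc k)
  have "Ck_on k S (\<lambda>x. sqrt (f x))"
    using Suc by (blast intro: Ck_on_Suc_imp_Ck_on)
  then have "Ck_on k S (\<lambda>x. inverse (sqrt (f x)) * (1/2))"
    using Suc.prems(2) by (intro Ck_on_mult Ck_on_const Ck_on_inverse) force+
  then have half_inv: "Ck_on k S (\<lambda>x. inverse (sqrt (f x)) / 2)"
    by simp
  show ?case
  proof (rule Ck_on_SucI)
    fix x assume "x \<in> S"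
    then show "((\<lambda>x. sqrt (f x)) has_derivative
        (\<lambda>h. frechet_derivative f (at x) h * (inverse (sqrt (f x)) / 2))) (at x)"
      using Suc.prems by (intro DERIV_compose_FDERIV DERIV_real_sqrt Ck_on_Suc_has_derivative) auto
  next
    fix i :: 'a assume "i \<in> Basis"
    then show "Ck_on k S (\<lambda>x. frechet_derivative f (at x) i * (inverse (sqrt (f x)) / 2))"
      using Suc.prems by (intro Ck_on_mult half_inv) auto
  qed
qed (simp add: continuous_on_real_sqrt)

lemma Ck_on_sum:
  "finite I \<Longrightarrow> (\<And>i. i \<in> I \<Longrightarrow> Ck_on k S (f i)) \<Longrightarrow> Ck_on k S (\<lambda>x. \<Sum>i\<in>I. f i x)"
  by (induction I rule: finite_induct) (auto intro!: Ck_on_add Ck_on_const)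

lemma Ck_on_prod:
  "finite I \<Longrightarrow> (\<And>i. i \<in> I \<Longrightarrow> Ck_on k S (f i)) \<Longrightarrow> Ck_on k S (\<lambda>x. \<Prod>i\<in>I. f i x)"
  by (induction I rule: finite_induct) (auto intro!: Ck_on_mult Ck_on_const)

lemma Ck_on_minus: "Ck_on k S f \<Longrightarrow> Ck_on k S (\<lambda>x. - f x)"
  using Ck_on_mult[OF Ck_on_const[of k "-1"]] by simp

lemma Ck_on_diff: "Ck_on k S f \<Longrightarrow> Ck_on k S g \<Longrightarrow> Ck_on k S (\<lambda>x. f x - g x)"
  using Ck_on_add[OF _ Ck_on_minus, of k f g] by simp

lemma Ck_on_divide_const: "Ck_on k S f \<Longrightarrow> Ck_on k S (\<lambda>x. f x / c)"
  using Ck_on_mult[OF _ Ck_on_const, of k f "inverse c"] by (simp add: divide_inverse)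

end

section \<open>Determinant of a diagonal plus rank-one matrix\<close>

lemma det_axis_rows_replace_row:
  fixes w :: "real^'n::finite"
  shows "det (\<chi> i. if i = z then w else axis i (d i)) = w$z * (\<Prod>i\<in>UNIV-{z}. d i)"
proof -
  let ?A = "(\<chi> i. if i = z then w else axis i (d i)) :: real^'n^'n"
  have zero: "(\<Prod>i\<in>UNIV. ?A$i$(p i)) = 0" if p: "p permutes UNIV" "p \<noteq> id" for p
  proof -
    obtain i where i: "p i \<noteq> i" using p(2) by (metis eq_id_iff)
    have "\<exists>j. j \<noteq> z \<and> p j \<noteq> j"
    proof (cases "i = z")
      case True
      have "p (p z) \<noteq> p z" using i True permutes_inj[OF p(1)] by (metis injD)
      then show ?thesis using True i by metis
    qed (use i in blast)
    then obtain j where j: "j \<noteq> z" "p j \<noteq> j" by blast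
    then have "?A$j$(p j) = 0" by (simp add: axis_def)
    then show ?thesis by (meson finite UNIV_I prod_zero)
  qed
  have "det ?A = (\<Sum>p\<in>{p. p permutes UNIV}. if p = id then of_int (sign p) * (\<Prod>i\<in>UNIV. ?A$i$(p i)) else 0)"
    unfolding det_def by (rule sum.cong) (use zero in auto)
  also have "\<dots> = (\<Prod>i\<in>UNIV. ?A$i$i)"
    by (simp add: sum.delta'[where a=id] permutes_id sign_id del: vec_lambda_beta)
  also have "\<dots> = ?A$z$z * (\<Prod>i\<in>UNIV-{z}. ?A$i$i)"
    by (rule prod.remove) auto
  also have "\<dots> = w$z * (\<Prod>i\<in>UNIV-{z}. d i)"
    by (auto intro!: prod.cong simp: axis_def)
  finally show ?thesis .
qed

lemma det_axis_add_rows_replace_row: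
  fixes w :: "real^'n::finite"
  assumes "z \<notin> T"
  shows "det (\<chi> i. if i = z then w else if i \<in> T then axis i (d i) + w else axis i (d i))
           = w$z * (\<Prod>i\<in>UNIV-{z}. d i)"
  using finite[of T] assms
proof (induction T rule: finite_induct)
  case empty
  have "(\<chi> i. if i = z then w else if i \<in> {} then axis i (d i) + w else axis i (d i))
      = (\<chi> i. if i = z then w else axis i (d i))"
    by (simp add: vec_eq_iff)
  then show ?case using det_axis_rows_replace_row[of z w d] by simp
next
  case (insert t T)
  let ?C = "\<lambda>i. if i = z then w else if i \<in> T then axis i (d i) + w else axis i (d i)"
  have tz: "t \<noteq> z" using insert by auto
  have split: "(\<chi> i. if i = z then w else if i \<in> insert t T then axis i (d i) + w else axis i (d i))
     = (\<chi> i. if i = t then axis i (d i) + w else ?C i)"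
    using tz by (auto simp: vec_eq_iff)
  have "(\<chi> i. if i = t then axis i (d i) else ?C i) = (\<chi> i. ?C i)"
    using insert tz by (auto simp: vec_eq_iff)
  moreover have "det (\<chi> i. if i = t then w else ?C i) = 0"
    by (rule det_identical_rows[OF tz]) (use tz in \<open>simp add: row_def vec_eq_iff\<close>)
  ultimately show ?case
    unfolding split det_row_add using insert by simp
qed

lemma det_axis_add_rows:
  fixes w :: "real^'n::finite"
  shows "det (\<chi> i. if i \<in> T then axis i (d i) + w else axis i (d i))
           = (\<Prod>i\<in>UNIV. d i) + (\<Sum>k\<in>T. w$k * (\<Prod>i\<in>UNIV-{k}. d i))"
  using finite[of T]
proof (induction T rule: finite_induct)
  case empty
  have "det (\<chi> i. axis i (d i) :: real^'n^'n) = (\<Prod>i\<in>UNIV. d i)"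
    by (subst det_diagonal) (auto simp: axis_def)
  then show ?case by simp
next
  case (insert z T)
  let ?C = "\<lambda>i. if i \<in> T then axis i (d i) + w else axis i (d i)"
  have split: "(\<chi> i. if i \<in> insert z T then axis i (d i) + w else axis i (d i))
     = (\<chi> i. if i = z then axis i (d i) + w else ?C i)"
    by (auto simp: vec_eq_iff)
  have "(\<chi> i. if i = z then axis i (d i) else ?C i) = (\<chi> i. ?C i)"
    using insert by (auto simp: vec_eq_iff)
  moreover have "det (\<chi> i. if i = z then w else ?C i) = w$z * (\<Prod>i\<in>UNIV-{z}. d i)"
    using det_axis_add_rows_replace_row[of z T w d] insert by simp
  ultimately show ?case
    unfolding split det_row_add using insert by simp
qed

lemma det_diagonal_add_rank_one:
  fixes w :: "real^'n::finite"
  shows "det (\<chi> i j. (if i = j then d i else 0) + w$j)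
           = (\<Prod>i\<in>UNIV. d i) + (\<Sum>k\<in>UNIV. w$k * (\<Prod>i\<in>UNIV-{k}. d i))"
proof -
  have "(\<chi> i j. (if i = j then d i else 0) + w$j) = (\<chi> i. if i \<in> UNIV then axis i (d i) + w else axis i (d i))"
    by (auto simp: vec_eq_iff axis_def)
  then show ?thesis using det_axis_add_rows[of UNIV d w] by simp
qed

section \<open>The chart of the simplex and its Fisher metric\<close>

lemma sum_UNIV_option: "(\<Sum>i\<in>(UNIV::'a::finite option set). f i) = f None + (\<Sum>k\<in>UNIV. f (Some k))"
  by (simp add: UNIV_option_conv sum.reindex)

lemma prod_UNIV_option: "(\<Prod>i\<in>(UNIV::'a::finite option set). f i) = f None * (\<Prod>k\<in>UNIV. f (Some k))"
  by (simp add: UNIV_option_conv prod.reindex)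

lemma real_sqrt_prod: "finite I \<Longrightarrow> sqrt (\<Prod>i\<in>I. f i) = (\<Prod>i\<in>I. sqrt (f i))"
  by (induction I rule: finite_induct) (auto simp: real_sqrt_mult)

lemma matrix_inv_mult_left:
  fixes A :: "'a::semiring_1^'n^'n"
  shows "invertible A \<Longrightarrow> matrix_inv A ** A = mat 1"
  unfolding invertible_def matrix_inv_def by (metis (mono_tags, lifting) someI_ex)

lemma chart_Some [simp]: "chart y $ Some k = y $ k"
  by (simp add: chart_def)

lemma chart_None: "chart y $ None = 1 - (\<Sum>k\<in>UNIV. y $ k)"
  by (simp add: chart_def)

lemma chart_inv_chart [simp]: "chart_inv (chart x) = x"
  by (simp add: chart_inv_def vec_eq_iff)

lemma cbasis_Some [simp]: "cbasis a $ Some c = (if c = a then 1 else 0)"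
  by (simp add: cbasis_def axis_def)

lemma cbasis_None [simp]: "cbasis a $ None = -1"
  by (simp add: cbasis_def axis_def)

lemma chart_pos: "y \<in> chart_domain \<Longrightarrow> 0 < chart y $ i"
  by (cases i) (auto simp: chart_domain_def chart_None)

lemma chart_domain_nth_pos: "y \<in> chart_domain \<Longrightarrow> 0 < y $ k"
  using chart_pos[of y "Some k"] by simp

lemma chart_domain_nonzero:
  assumes "y \<in> chart_domain"
  shows "chart y $ i \<noteq> 0" and "y $ k \<noteq> 0"
  using chart_pos[OF assms, of i] chart_domain_nth_pos[OF assms, of k] by simp_all

lemma open_chart_domain: "open (chart_domain :: (real^'m::finite) set)"
proof -
  have "chart_domain = (\<Inter>k. {x::real^'m. 0 < x$k}) \<inter> {x. (\<Sum>k\<in>UNIV. x$k) < 1}"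
    by (auto simp: chart_domain_def)
  moreover have "open {x::real^'m. (\<Sum>k\<in>UNIV. x$k) < 1}"
    by (intro open_Collect_less continuous_intros)
  moreover have "open (\<Inter>k. {x::real^'m. 0 < x$k})"
    by (rule open_INT) (auto simp: open_halfspace_component_gt_cart)
  ultimately show ?thesis by (metis open_Int)
qed

lemma chart_inv_prob_simplex:
  assumes q: "q \<in> prob_simplex"
  shows "chart_inv q \<in> chart_domain" and "chart (chart_inv q) = q"
proof -
  have pos: "\<And>i. 0 < q $ i" and sum: "q $ None + (\<Sum>k\<in>UNIV. q $ Some k) = 1"
    using q by (auto simp: prob_simplex_def sum_UNIV_option)
  have "(\<Sum>k\<in>UNIV. q $ Some k) < 1"
    using pos[of None] sum by linarith
  then show "chart_inv q \<in> chart_domain"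
    using pos by (auto simp: chart_domain_def chart_inv_def)
  show "chart (chart_inv q) = q"
    using sum by (auto simp: vec_eq_iff chart_def chart_inv_def split: option.split)
qed

lemma metric_coords_eq:
  "metric_coords y $ a $ b = (if a = b then 1 / y$a else 0) + 1 / chart y $ None"
proof -
  have "(\<Sum>k\<in>UNIV. (if k = a then if k = b then 1 else 0 else 0) / y $ k) = (if a = b then 1 / y$a else 0)"
    by (cases "a = b") (auto simp: if_distrib[of "\<lambda>x. x / _"] cong: if_cong)
  then show ?thesis
    unfolding metric_coords_def fisher_metric_def
    by (simp add: sum_UNIV_option if_distrib[of "\<lambda>x. x * _"] sum.If_cases)
qed

lemma det_metric_coords:
  assumes y: "y \<in> chart_domain"
  shows "det (metric_coords y) = 1 / (\<Prod>i\<in>UNIV. chart y $ i)"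
proof -
  let ?c = "1 / chart y $ None"
  have pos: "0 < y $ k" for k using chart_domain_nth_pos[OF y] .
  have "metric_coords y = (\<chi> i j. (if i = j then 1 / y$i else 0) + (\<chi> j. ?c) $ j)"
    by (auto simp: vec_eq_iff metric_coords_eq)
  then have "det (metric_coords y) = (\<Prod>i\<in>UNIV. 1 / y$i) + (\<Sum>k\<in>UNIV. ?c * (\<Prod>i\<in>UNIV-{k}. 1 / y$i))"
    using det_diagonal_add_rank_one[of "\<lambda>i. 1 / y$i" "\<chi> j. ?c"] by simp
  moreover have "(\<Prod>i\<in>UNIV-{k}. 1 / y$i) = y$k * (\<Prod>i\<in>UNIV. 1 / y$i)" for k
    using prod.remove[of UNIV k "\<lambda>i. 1 / y$i"] pos[of k] by simp
  ultimately have "det (metric_coords y) = (\<Prod>i\<in>UNIV. 1 / y$i) * (1 + ?c * (\<Sum>k\<in>UNIV. y$k))"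
    by (simp add: sum_distrib_left sum_distrib_right sum_divide_distrib algebra_simps)
  also have "1 + ?c * (\<Sum>k\<in>UNIV. y$k) = ?c"
    using chart_pos[OF y, of None] by (simp add: chart_None field_simps)
  finally show ?thesis
    by (simp add: prod_UNIV_option prod_dividef)
qed

lemma invertible_metric_coords: "y \<in> chart_domain \<Longrightarrow> invertible (metric_coords y)"
  using chart_pos[of y] by (simp add: invertible_det_nz det_metric_coords prod_pos less_imp_neq[symmetric])

definition vol_density :: "real^'m::finite \<Rightarrow> real" where
  "vol_density y = (\<Prod>i\<in>UNIV. inverse (sqrt (chart y $ i)))"

lemma sqrt_det_metric_coords:
  "y \<in> chart_domain \<Longrightarrow> sqrt (det (metric_coords y)) = vol_density y"
  by (simp add: det_metric_coords vol_density_def real_sqrt_divide real_sqrt_prod real_sqrt_inverse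
      prod_inversef[symmetric] divide_inverse o_def)

lemma vol_density_pos: "y \<in> chart_domain \<Longrightarrow> 0 < vol_density y"
  using chart_pos[of y] by (auto simp: vol_density_def intro: prod_pos)

section \<open>Pullback of the sphere forms\<close>

lemma sqrtv_has_derivative:
  fixes q :: "real^'n::finite"
  assumes pos: "\<And>i. 0 < q $ i"
  shows "(sqrtv has_derivative (\<lambda>h. \<chi> i. h$i / (2 * sqrt (q$i)))) (at q)"
proof -
  have "((\<lambda>x. sqrt (x $ i)) has_derivative (\<lambda>h. h$i / (2 * sqrt (q$i)))) (at q)" for i
    using DERIV_compose_FDERIV[where g="\<lambda>x. x $ i", OF DERIV_real_sqrt[OF pos]
        bounded_linear_imp_has_derivative[OF bounded_linear_vec_nth]]
    by (simp add: field_simps)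
  then have "((\<lambda>x. sqrtv x \<bullet> axis i 1) has_derivative
      (\<lambda>h. (\<chi> i. h$i / (2 * sqrt (q$i))) \<bullet> axis i 1)) (at q)" for i
    by (simp add: sqrtv_def inner_axis)
  then show ?thesis
    using has_derivative_componentwise_within[of sqrtv _ q UNIV]
    by (auto simp: Basis_vec_def axis_eq_axis)
qed

lemma pullback_form_tangent:
  fixes q :: "real^'n::finite"
  assumes pos: "\<And>i. 0 < q $ i" and v: "v \<in> tangent_space"
  shows "pullback_form W q v = (\<chi> i. v$i / (2 * sqrt (q$i))) \<bullet> (W *v sqrtv q)"
proof -
  have "(\<chi> i. v$i / (2 * sqrt (q$i))) \<bullet> sqrtv q = (\<Sum>i\<in>UNIV. v$i) / 2"
    using pos by (simp add: inner_vec_def sqrtv_def sum_divide_distrib less_imp_neq[symmetric])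
  then show ?thesis
    using v frechet_derivative_at[OF sqrtv_has_derivative[OF pos], symmetric]
    by (simp add: pullback_form_def alpha_bar_def tangent_space_def inner_diff_right)
qed

lemma pullback_form_add: "pullback_form (A + B) q v = pullback_form A q v + pullback_form B q v"
  by (simp add: pullback_form_def alpha_bar_def matrix_vector_mult_add_rdistrib inner_add_right
      inner_diff_right algebra_simps)

lemma sqrt_quadratic_form_has_derivative:
  fixes S :: "real^'n::finite^'n"
  assumes sym: "transpose S = S" and pos: "\<And>i. 0 < q $ i"
  shows "((\<lambda>p. (1/2) * (sqrtv p \<bullet> (S *v sqrtv p))) has_derivative
           (\<lambda>v. (\<chi> i. v$i / (2 * sqrt (q$i))) \<bullet> (S *v sqrtv q))) (at q)"
proof -
  let ?D = "\<lambda>v. \<chi> i. v$i / (2 * sqrt (q$i))"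
  have "((\<lambda>p. (1/2) * (sqrtv p \<bullet> (S *v sqrtv p))) has_derivative
        (\<lambda>v. (1/2) * (sqrtv q \<bullet> (S *v ?D v) + ?D v \<bullet> (S *v sqrtv q)))) (at q)"
    by (intro has_derivative_mult_right has_derivative_inner sqrtv_has_derivative[OF pos]
        bounded_linear.has_derivative[OF matrix_vector_mul_bounded_linear])
  moreover have "sqrtv q \<bullet> (S *v ?D v) = ?D v \<bullet> (S *v sqrtv q)" for v
  proof -
    have "sqrtv q \<bullet> (S *v ?D v) = (transpose S *v sqrtv q) \<bullet> ?D v"
      by (simp add: dot_lmul_matrix[symmetric])
    then show ?thesis
      using sym by (simp add: inner_commute)
  qed
  ultimately show ?thesis by simp
qed

definition pullback_form_coords :: "real^('m::finite option)^('m option) \<Rightarrow> real^('m option) \<Rightarrow> 'm \<Rightarrow> real" where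
  "pullback_form_coords W q a =
     (W *v sqrtv q) $ Some a / (2 * sqrt (q $ Some a)) - (W *v sqrtv q) $ None / (2 * sqrt (q $ None))"

lemma pullback_form_chart:
  assumes q: "q \<in> prob_simplex" and v: "v \<in> tangent_space"
  shows "pullback_form W q v = (\<Sum>a\<in>UNIV. pullback_form_coords W q a * v $ Some a)"
proof -
  have "v $ None = - (\<Sum>a\<in>UNIV. v $ Some a)"
    using v by (simp add: tangent_space_def sum_UNIV_option eq_neg_iff_add_eq_0)
  then show ?thesis
    using q v
    by (simp add: pullback_form_tangent prob_simplex_def inner_vec_def sum_UNIV_option pullback_form_coords_def
        algebra_simps sum_distrib_right sum_distrib_left sum_divide_distrib sum_subtractf sum_negf)
qed

lemma inner_skew_matrix_self:
  fixes F :: "real^'n::finite^'n"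
  assumes skew: "\<And>a b. F$a$b = - F$b$a"
  shows "r \<bullet> (F *v r) = 0"
proof -
  have expand: "r \<bullet> (F *v r) = (\<Sum>a\<in>UNIV. \<Sum>b\<in>UNIV. r$a * F$a$b * r$b)"
    by (simp add: inner_vec_def matrix_vector_mult_def sum_distrib_left mult_ac)
  also have "\<dots> = (\<Sum>b\<in>UNIV. \<Sum>a\<in>UNIV. r$a * F$a$b * r$b)"
    by (rule sum.swap)
  also have "\<dots> = (\<Sum>b\<in>UNIV. \<Sum>a\<in>UNIV. - (r$b * F$b$a * r$a))"
  proof (intro sum.cong refl)
    fix a b show "r$a * F$a$b * r$b = - (r$b * F$b$a * r$a)"
      using skew[of a b] by simp
  qed
  also have "\<dots> = - (\<Sum>b\<in>UNIV. \<Sum>a\<in>UNIV. r$b * F$b$a * r$a)"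
    by (simp add: sum_negf)
  finally show ?thesis
    using expand by linarith
qed

section \<open>A 2-form whose codifferential is the pullback of a skew form\<close>

definition inv_sqrt_prod_except :: "real^'m::finite \<Rightarrow> 'm \<Rightarrow> 'm \<Rightarrow> real" where
  "inv_sqrt_prod_except y k j = (\<Prod>i\<in>UNIV-{k,j}. inverse (sqrt (y$i)))"

text \<open>
  The second summand is antisymmetrised so that the density is skew, and it is divided by
  n - 2 = CARD('m) - 1 because each of the n - 2 indices k different from j contributes it once
  to the divergence sum_k d_k P_kj.
\<close>
definition bivector_factor :: "real^('m::finite option)^('m option) \<Rightarrow> real^'m \<Rightarrow> 'm \<Rightarrow> 'm \<Rightarrow> real" where
  "bivector_factor F y k j = - sqrt (chart y $ None) * F$Some k$Some j
     + (F$None$Some j * sqrt (y$k) - F$None$Some k * sqrt (y$j)) / (real CARD('m) - 1)"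

definition bivector_density :: "real^('m::finite option)^('m option) \<Rightarrow> real^'m \<Rightarrow> real^'m^'m" where
  "bivector_density F y = (\<chi> k j. inv_sqrt_prod_except y k j * bivector_factor F y k j)"

lemma bivector_density_skew:
  assumes skew: "\<And>a b. F$a$b = - F$b$a"
  shows "bivector_density F y $ k $ j = - bivector_density F y $ j $ k"
proof -
  have "inv_sqrt_prod_except y k j = inv_sqrt_prod_except y j k"
    by (simp add: inv_sqrt_prod_except_def insert_commute)
  moreover have "bivector_factor F y k j = - bivector_factor F y j k"
    using skew[of "Some k" "Some j"] by (simp add: bivector_factor_def diff_divide_distrib)
  ultimately show ?thesis by (simp add: bivector_density_def)
qed

lemma has_derivative_sqrt_nth:
  "x \<in> chart_domain \<Longrightarrow>
     ((\<lambda>y. sqrt (y $ k)) has_derivative (\<lambda>h. h$k * (inverse (sqrt (x$k)) / 2))) (at x)"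
  by (intro DERIV_compose_FDERIV[OF DERIV_real_sqrt] bounded_linear_imp_has_derivative
      bounded_linear_vec_nth chart_domain_nth_pos)

lemma has_derivative_sqrt_chart_None:
  fixes x :: "real^'m::finite"
  assumes x: "x \<in> chart_domain"
  shows "((\<lambda>y. sqrt (chart y $ None)) has_derivative
          (\<lambda>h. - (\<Sum>l\<in>UNIV. h$l) * (inverse (sqrt (chart x $ None)) / 2))) (at x)"
proof -
  have "((\<lambda>y::real^'m. 1 - (\<Sum>l\<in>UNIV. y$l)) has_derivative (\<lambda>h. 0 - (\<Sum>l\<in>UNIV. h$l))) (at x)"
    by (intro has_derivative_diff has_derivative_const has_derivative_sum
        bounded_linear_imp_has_derivative bounded_linear_vec_nth)
  from DERIV_compose_FDERIV[OF DERIV_real_sqrt this] show ?thesis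
    using chart_pos[OF x, of None] by (simp add: chart_None)
qed

lemma inv_sqrt_prod_except_partial_self:
  assumes x: "x \<in> chart_domain"
  obtains D where "((\<lambda>y. inv_sqrt_prod_except y k j) has_derivative D) (at x)" and "D (axis k 1) = 0"
proof -
  let ?c = "\<lambda>i. - (inverse (sqrt (x$i)) ^ 2 * (inverse (sqrt (x$i)) / 2))"
  have "((\<lambda>y. inverse (sqrt (y$i))) has_derivative (\<lambda>h. h$i * ?c i)) (at x)" for i
    using chart_domain_nth_pos[OF x, of i]
    by (intro DERIV_compose_FDERIV bounded_linear_imp_has_derivative bounded_linear_vec_nth)
      (auto intro!: derivative_eq_intros simp: power2_eq_square)
  then have "((\<lambda>y. inv_sqrt_prod_except y k j) has_derivative
     (\<lambda>h. \<Sum>i\<in>UNIV-{k,j}. h$i * ?c i * (\<Prod>l\<in>UNIV-{k,j}-{i}. inverse (sqrt (x$l))))) (at x)"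
    unfolding inv_sqrt_prod_except_def by (intro has_derivative_prod)
  moreover have "(\<Sum>i\<in>UNIV-{k,j}. axis k 1 $ i * ?c i * (\<Prod>l\<in>UNIV-{k,j}-{i}. inverse (sqrt (x$l)))) = 0"
    by (rule sum.neutral) (auto simp: axis_def)
  ultimately show ?thesis using that by blast
qed

lemma bivector_factor_has_derivative:
  fixes F :: "real^('m::finite option)^('m option)"
  assumes x: "x \<in> chart_domain"
  shows "((\<lambda>y. bivector_factor F y k j) has_derivative (\<lambda>h.
      (\<Sum>l\<in>UNIV. h$l) * (inverse (sqrt (chart x $ None)) / 2) * F$Some k$Some j
      + (F$None$Some j * (h$k * (inverse (sqrt (x$k)) / 2)) - F$None$Some k * (h$j * (inverse (sqrt (x$j)) / 2)))
          / (real CARD('m) - 1))) (at x)"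
proof -
  have "((\<lambda>y. bivector_factor F y k j) has_derivative (\<lambda>h.
      - (- (\<Sum>l\<in>UNIV. h$l) * (inverse (sqrt (chart x $ None)) / 2)) * F$Some k$Some j
      + (F$None$Some j * (h$k * (inverse (sqrt (x$k)) / 2)) - F$None$Some k * (h$j * (inverse (sqrt (x$j)) / 2)))
          / (real CARD('m) - 1))) (at x)"
    unfolding bivector_factor_def
    by (intro has_derivative_add has_derivative_mult_left has_derivative_minus
        bounded_linear.has_derivative[OF bounded_linear_divide] has_derivative_diff has_derivative_mult_right
        has_derivative_sqrt_chart_None[OF x] has_derivative_sqrt_nth[OF x])
  then show ?thesis by simp
qed

lemma bivector_density_differentiable:
  assumes x: "x \<in> chart_domain"
  shows "(\<lambda>y. bivector_density F y $ k $ j) differentiable (at x)"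
proof -
  obtain D where "((\<lambda>y. inv_sqrt_prod_except y k j) has_derivative D) (at x)"
    using inv_sqrt_prod_except_partial_self[OF x] .
  then show ?thesis
    unfolding bivector_density_def vec_lambda_beta
    by (intro differentiable_mult) (use bivector_factor_has_derivative[OF x] in \<open>auto simp: differentiable_def\<close>)
qed

lemma bivector_density_partial:
  fixes F :: "real^('m::finite option)^('m option)"
  assumes x: "x \<in> chart_domain"
  shows "frechet_derivative (\<lambda>y. bivector_density F y $ k $ j) (at x) (axis k 1)
    = inv_sqrt_prod_except x k j *
        (F$Some k$Some j / (2 * sqrt (chart x $ None))
         + (F$None$Some j / (2 * sqrt (x$k)) - (if j = k then F$None$Some k / (2 * sqrt (x$j)) else 0))
             / (real CARD('m) - 1))"
proof -
  obtain D where D: "((\<lambda>y. inv_sqrt_prod_except y k j) has_derivative D) (at x)" "D (axis k 1) = 0"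
    using inv_sqrt_prod_except_partial_self[OF x] .
  have "((\<lambda>y. bivector_density F y $ k $ j) has_derivative (\<lambda>h. inv_sqrt_prod_except x k j * (
      (\<Sum>l\<in>UNIV. h$l) * (inverse (sqrt (chart x $ None)) / 2) * F$Some k$Some j
      + (F$None$Some j * (h$k * (inverse (sqrt (x$k)) / 2)) - F$None$Some k * (h$j * (inverse (sqrt (x$j)) / 2)))
          / (real CARD('m) - 1)) + D h * bivector_factor F x k j)) (at x)"
    unfolding bivector_density_def vec_lambda_beta
    by (intro has_derivative_mult D(1) bivector_factor_has_derivative[OF x])
  note partial = fun_cong[OF frechet_derivative_at[OF this, symmetric], of "axis k 1"]
  have "(\<Sum>l\<in>UNIV. axis k 1 $ l) = (1::real)"
    by (simp add: axis_def)
  then show ?thesis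
    unfolding partial D(2) by (cases "j = k") (simp_all add: axis_def field_simps)
qed

lemma inv_sqrt_prod_except_eq:
  assumes x: "x \<in> chart_domain" and "k \<noteq> j"
  shows "inv_sqrt_prod_except x k j = (\<Prod>i\<in>UNIV. inverse (sqrt (x$i))) * sqrt (x$k) * sqrt (x$j)"
proof -
  have pos: "0 < sqrt (x$i)" for i using chart_domain_nth_pos[OF x] by simp
  have "(\<Prod>i\<in>UNIV. inverse (sqrt (x$i)))
      = inverse (sqrt (x$k)) * (inverse (sqrt (x$j)) * (\<Prod>i\<in>UNIV-{k}-{j}. inverse (sqrt (x$i))))"
    using \<open>k \<noteq> j\<close> by (simp add: prod.remove[of UNIV k] prod.remove[of "UNIV-{k}" j])
  also have "UNIV-{k}-{j} = UNIV-{k,j}" by auto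
  finally show ?thesis
    using pos[of k] pos[of j] by (simp add: inv_sqrt_prod_except_def field_simps)
qed

lemma bivector_density_divergence:
  fixes F :: "real^('m::finite option)^('m option)"
  assumes x: "x \<in> chart_domain" and skew: "\<And>a b. F$a$b = - F$b$a" and card: "2 \<le> CARD('m)"
  shows "(\<Sum>k\<in>UNIV. frechet_derivative (\<lambda>y. bivector_density F y $ k $ j) (at x) (axis k 1))
     = - vol_density x * sqrt (x$j) * (F *v sqrtv (chart x)) $ Some j / 2"
proof -
  define r0 where "r0 = sqrt (chart x $ None)"
  define s where "s l = sqrt (x$l)" for l
  define \<Psi> where "\<Psi> = (\<Prod>l\<in>UNIV. inverse (s l))"
  define c where "c = real CARD('m) - 1"
  have r0: "0 < r0" using chart_pos[OF x, of None] by (simp add: r0_def)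
  have c: "0 < c" using card by (simp add: c_def)
  have s: "0 < s l" for l using chart_domain_nth_pos[OF x] by (simp add: s_def)
  have diag: "F$a$a = 0" for a using skew[of a a] by simp
  let ?d = "\<lambda>k. frechet_derivative (\<lambda>y. bivector_density F y $ k $ j) (at x) (axis k 1)"
  have other: "?d k = \<Psi> * s j / (2 * r0) * (s k * F$Some k$Some j) + \<Psi> * s j * F$None$Some j / (2 * c)"
    if "k \<noteq> j" for k
    using that s[of k] r0 c
    unfolding bivector_density_partial[OF x] inv_sqrt_prod_except_eq[OF x that]
      r0_def[symmetric] s_def[symmetric] c_def[symmetric] \<Psi>_def
    by (simp add: field_simps)
  have "(\<Sum>k\<in>UNIV. ?d k) = (\<Sum>k\<in>UNIV-{j}. ?d k)"
    by (rule sum.mono_neutral_right) (auto simp: bivector_density_partial[OF x] diag)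
  also have "\<dots> = \<Psi> * s j / (2 * r0) * (\<Sum>k\<in>UNIV-{j}. s k * F$Some k$Some j)
      + real (card (UNIV - {j} :: 'm set)) * (\<Psi> * s j * F$None$Some j / (2 * c))"
    by (simp add: other sum.distrib sum_distrib_left)
  also have "real (card (UNIV - {j} :: 'm set)) = c"
    using card by (simp add: c_def card_Diff_singleton of_nat_diff)
  also have "(\<Sum>k\<in>UNIV-{j}. s k * F$Some k$Some j) = - (\<Sum>k\<in>UNIV. F$Some j$Some k * s k)"
    using skew[of "Some _" "Some j"]
    by (simp add: sum.mono_neutral_left[of UNIV "UNIV-{j}"] diag sum_negf[symmetric] mult.commute)
  finally have div: "(\<Sum>k\<in>UNIV. ?d k)
      = \<Psi> * s j / (2 * r0) * - (\<Sum>k\<in>UNIV. F$Some j$Some k * s k) + \<Psi> * s j * F$None$Some j / 2"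
    using c by simp
  have vol: "vol_density x = \<Psi> / r0"
    by (simp add: vol_density_def prod_UNIV_option r0_def \<Psi>_def s_def divide_inverse)
  have Fr: "(F *v sqrtv (chart x)) $ Some j = - F$None$Some j * r0 + (\<Sum>k\<in>UNIV. F$Some j$Some k * s k)"
    using skew[of "Some j" None]
    by (simp add: matrix_vector_mult_def sqrtv_def sum_UNIV_option r0_def s_def)
  show ?thesis
    unfolding div vol Fr s_def[symmetric] using r0 by (simp add: field_simps)
qed

definition codiff_potential_coords :: "real^('m::finite option)^('m option) \<Rightarrow> real^'m \<Rightarrow> real^'m^'m" where
  "codiff_potential_coords F y =
     inverse (vol_density y) *\<^sub>R (metric_coords y ** bivector_density F y ** transpose (metric_coords y))"

definition codiff_potential ::
  "real^('m::finite option)^('m option) \<Rightarrow> real^('m option) \<Rightarrow> real^('m option) \<Rightarrow> real^('m option) \<Rightarrow> real" where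
  "codiff_potential F q v w =
     (\<Sum>a\<in>UNIV. \<Sum>b\<in>UNIV. codiff_potential_coords F (chart_inv q) $ a $ b * v $ Some a * w $ Some b)"

lemma form2_coords_codiff_potential: "form2_coords (codiff_potential F) x = codiff_potential_coords F x"
proof -
  have "(\<Sum>a\<in>UNIV. \<Sum>b\<in>UNIV. codiff_potential_coords F x $ a $ b * cbasis c $ Some a * cbasis d $ Some b)
      = codiff_potential_coords F x $ c $ d" for c d
    by (simp add: if_distrib[of "\<lambda>t. _ * t"] cong: if_cong)
  then show ?thesis by (simp add: form2_coords_def codiff_potential_def vec_eq_iff)
qed

lemma raise_indices_codiff_potential:
  assumes y: "y \<in> chart_domain"
  shows "matrix_inv (metric_coords y) ** form2_coords (codiff_potential F) y ** transpose (matrix_inv (metric_coords y))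
       = inverse (vol_density y) *\<^sub>R bivector_density F y"
proof -
  let ?g = "metric_coords y" and ?h = "matrix_inv (metric_coords y)"
  have "?h ** (?g ** bivector_density F y ** transpose ?g) ** transpose ?h
      = (?h ** ?g) ** bivector_density F y ** transpose (?h ** ?g)"
    by (simp add: matrix_mul_assoc matrix_transpose_mul)
  also have "\<dots> = bivector_density F y"
    by (simp add: matrix_inv_mult_left[OF invertible_metric_coords[OF y]])
  finally show ?thesis
    by (simp add: form2_coords_codiff_potential codiff_potential_coords_def matrix_scalar_ac
        scalar_matrix_assoc[symmetric])
qed

lemma codiff2_coords_codiff_potential:
  fixes F :: "real^('m::finite option)^('m option)"
  assumes x: "x \<in> chart_domain" and skew: "\<And>a b. F$a$b = - F$b$a" and card: "2 \<le> CARD('m)"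
  shows "codiff2_coords (codiff_potential F) x
    = metric_coords x *v (\<chi> j. sqrt (x$j) * (F *v sqrtv (chart x)) $ Some j / 2)"
proof -
  have "frechet_derivative (\<lambda>y. sqrt (det (metric_coords y)) *
          (matrix_inv (metric_coords y) ** form2_coords (codiff_potential F) y
             ** transpose (matrix_inv (metric_coords y))) $ k $ j) (at x)
      = frechet_derivative (\<lambda>y. bivector_density F y $ k $ j) (at x)" for k j
  proof (rule sym, rule frechet_derivative_transform_within_open[OF
        bivector_density_differentiable[OF x] open_chart_domain x])
    fix y :: "real^'m" assume y: "y \<in> chart_domain"
    then show "bivector_density F y $ k $ j = sqrt (det (metric_coords y)) *
        (matrix_inv (metric_coords y) ** form2_coords (codiff_potential F) y
           ** transpose (matrix_inv (metric_coords y))) $ k $ j"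
      using vol_density_pos[OF y]
      by (simp add: raise_indices_codiff_potential sqrt_det_metric_coords)
  qed
  then show ?thesis
    using vol_density_pos[OF x]
    by (simp add: codiff2_coords_def Let_def bivector_density_divergence[OF x skew card]
        sqrt_det_metric_coords[OF x])
qed

lemma codiff_potential_coords_skew:
  assumes skew: "\<And>a b. F$a$b = - F$b$a"
  shows "codiff_potential_coords F y $ a $ b = - codiff_potential_coords F y $ b $ a"
proof -
  let ?g = "metric_coords y" and ?P = "bivector_density F y"
  have entry: "(?g ** ?P ** transpose ?g) $ a $ b = (\<Sum>c\<in>UNIV. \<Sum>d\<in>UNIV. ?g$a$d * ?P$d$c * ?g$b$c)" for a b
    by (simp add: matrix_matrix_mult_def transpose_def sum_distrib_right)
  have "(\<Sum>c\<in>UNIV. \<Sum>d\<in>UNIV. ?g$b$d * ?P$d$c * ?g$a$c) = (\<Sum>d\<in>UNIV. \<Sum>c\<in>UNIV. ?g$b$d * ?P$d$c * ?g$a$c)"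
    by (rule sum.swap)
  also have "\<dots> = (\<Sum>d\<in>UNIV. \<Sum>c\<in>UNIV. - (?g$a$c * ?P$c$d * ?g$b$d))"
  proof (intro sum.cong refl)
    fix c d show "?g$b$d * ?P$d$c * ?g$a$c = - (?g$a$c * ?P$c$d * ?g$b$d)"
      using bivector_density_skew[OF skew, of y d c] by simp
  qed
  also have "\<dots> = - (\<Sum>c\<in>UNIV. \<Sum>d\<in>UNIV. ?g$a$d * ?P$d$c * ?g$b$c)"
    by (simp add: sum_negf)
  finally show ?thesis
    by (simp add: codiff_potential_coords_def entry)
qed

lemma codiff_potential_skew:
  assumes skew: "\<And>a b. F$a$b = - F$b$a"
  shows "codiff_potential F q v w = - codiff_potential F q w v"
proof -
  let ?G = "codiff_potential_coords F (chart_inv q)"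
  have "codiff_potential F q w v = (\<Sum>b\<in>UNIV. \<Sum>a\<in>UNIV. ?G $ a $ b * w $ Some a * v $ Some b)"
    unfolding codiff_potential_def by (rule sum.swap)
  also have "\<dots> = (\<Sum>b\<in>UNIV. \<Sum>a\<in>UNIV. - (?G $ b $ a * v $ Some b * w $ Some a))"
  proof (intro sum.cong refl)
    fix a b show "?G $ a $ b * w $ Some a * v $ Some b = - (?G $ b $ a * v $ Some b * w $ Some a)"
      using codiff_potential_coords_skew[OF skew, of "chart_inv q" a b] by simp
  qed
  also have "\<dots> = - codiff_potential F q v w"
    by (simp add: codiff_potential_def sum_negf)
  finally show ?thesis by simp
qed

lemma codiff_potential_bilinear: "bilinear (codiff_potential F q)"
  unfolding bilinear_def
  by (intro conjI allI linearI)
    (simp_all add: codiff_potential_def algebra_simps sum.distrib sum_distrib_left)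

lemma metric_coords_mult_vec:
  "(metric_coords x *v H) $ a = H $ a / x $ a + (\<Sum>b\<in>UNIV. H $ b) / chart x $ None"
  by (simp add: matrix_vector_mult_def metric_coords_eq distrib_right sum.distrib sum_divide_distrib
      if_distrib[of "\<lambda>t. t * _"] cong: if_cong)

lemma codiff2_codiff_potential:
  fixes F :: "real^('m::finite option)^('m option)"
  assumes q: "q \<in> prob_simplex" and skew: "\<And>a b. F$a$b = - F$b$a" and card: "2 \<le> CARD('m)"
  shows "codiff2 (codiff_potential F) q v = (\<Sum>a\<in>UNIV. pullback_form_coords F q a * v $ Some a)"
proof -
  define x where "x = chart_inv q"
  have x: "x \<in> chart_domain" and q_eq: "chart x = q"
    using chart_inv_prob_simplex[OF q] by (simp_all add: x_def)
  let ?Fr = "F *v sqrtv q"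
  have half_over: "sqrt (q$i) * c / (2 * q$i) = c / (2 * sqrt (q$i))" for i c
  proof -
    have pos: "0 < q$i"
      using q by (simp add: prob_simplex_def)
    then have "sqrt (q$i) * c / (2 * q$i) = sqrt (q$i) * c / (2 * (sqrt (q$i) * sqrt (q$i)))"
      by simp
    also have "\<dots> = c / (2 * sqrt (q$i))"
      using pos by (simp add: field_simps)
    finally show ?thesis .
  qed
  have x_nth: "x $ b = q $ Some b" for b
    using q_eq by (metis chart_Some)
  have "(\<Sum>b\<in>UNIV. sqrt (q $ Some b) * ?Fr $ Some b) = sqrt (q $ None) * - ?Fr $ None"
    using inner_skew_matrix_self[OF skew, of "sqrtv q"]
    by (simp add: inner_vec_def sum_UNIV_option sqrtv_def eq_neg_iff_add_eq_0)
  then have "(\<Sum>b\<in>UNIV. sqrt (x$b) * ?Fr $ Some b / 2) / chart x $ None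
      = - (?Fr $ None / (2 * sqrt (q $ None)))"
    unfolding q_eq x_nth sum_divide_distrib[symmetric] by (simp add: half_over)
  then show ?thesis
    by (simp add: codiff2_def x_def[symmetric] codiff2_coords_codiff_potential[OF x skew card] q_eq
        metric_coords_mult_vec pullback_form_coords_def x_nth half_over)
qed

section \<open>Smoothness of the potential\<close>

lemmas Ck_on_chart_domain_intros =
  Ck_on_add[OF open_chart_domain] Ck_on_mult[OF open_chart_domain] Ck_on_diff[OF open_chart_domain]
  Ck_on_minus[OF open_chart_domain] Ck_on_divide_const[OF open_chart_domain]
  Ck_on_inverse[OF open_chart_domain] Ck_on_sqrt[OF open_chart_domain]
  Ck_on_sum[OF open_chart_domain finite] Ck_on_prod[OF open_chart_domain finite]
  Ck_on_const[OF open_chart_domain] Ck_on_bounded_linear[OF open_chart_domain bounded_linear_vec_nth]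

lemma Ck_on_chart: "Ck_on k chart_domain (\<lambda>y. chart y $ i)"
proof (cases i)
  case None
  have "Ck_on k chart_domain (\<lambda>y::real^'a. 1 - (\<Sum>l\<in>UNIV. y $ l))"
    by (intro Ck_on_chart_domain_intros)
  then show ?thesis using None by (simp add: chart_None)
qed (simp add: Ck_on_chart_domain_intros)

lemma Ck_on_metric_coords: "Ck_on k chart_domain (\<lambda>y. metric_coords y $ a $ b)"
proof -
  have eq: "(\<lambda>y. metric_coords y $ a $ b)
      = (\<lambda>y::real^'a. (if a = b then 1 else 0) * inverse (y$a) + inverse (chart y $ None))"
    by (simp add: fun_eq_iff metric_coords_eq divide_inverse)
  show ?thesis
    unfolding eq by (intro Ck_on_chart_domain_intros Ck_on_chart)
      (auto dest: chart_domain_nth_pos[of _ a] chart_pos[of _ None])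
qed

lemma Ck_on_bivector_density: "Ck_on k chart_domain (\<lambda>y. bivector_density F y $ c $ d)"
  unfolding bivector_density_def inv_sqrt_prod_except_def bivector_factor_def vec_lambda_beta
  by (intro Ck_on_chart_domain_intros Ck_on_chart)
    (auto dest: chart_domain_nth_pos chart_pos simp: chart_domain_nonzero)

lemma Ck_on_codiff_potential_coords: "Ck_on k chart_domain (\<lambda>y. codiff_potential_coords F y $ a $ b)"
proof -
  have eq: "(\<lambda>y. codiff_potential_coords F y $ a $ b) = (\<lambda>y. inverse (vol_density y) *
      (\<Sum>c\<in>UNIV. (\<Sum>d\<in>UNIV. metric_coords y $ a $ d * bivector_density F y $ d $ c) * metric_coords y $ b $ c))"
    by (simp add: codiff_potential_coords_def matrix_matrix_mult_def transpose_def fun_eq_iff)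
  have inv_vol: "Ck_on k chart_domain (\<lambda>y. inverse (vol_density y))"
    unfolding vol_density_def
    by (intro Ck_on_chart_domain_intros Ck_on_chart) (auto dest: chart_pos simp: chart_domain_nonzero)
  show ?thesis
    unfolding eq
    by (intro Ck_on_mult[OF open_chart_domain inv_vol] Ck_on_chart_domain_intros Ck_on_metric_coords
        Ck_on_bivector_density)
qed

lemma is_2form_codiff_potential:
  assumes "\<And>a b. F$a$b = - F$b$a"
  shows "is_2form (codiff_potential F)"
  unfolding is_2form_def smooth_on_def form2_coords_codiff_potential
  using codiff_potential_bilinear codiff_potential_skew[OF assms] Ck_on_codiff_potential_coords by blast

theorem mainTheorem1:
  fixes V :: "real^('m::finite option)^('m option)"
  assumes "CARD('m) \<ge> 2"
  shows "(\<forall>q\<in>prob_simplex.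
            (\<lambda>p. (1/2) * (sqrtv p \<bullet> (sym_part V *v sqrtv p))) differentiable (at q) \<and>
            (\<forall>v\<in>tangent_space.
               frechet_derivative (\<lambda>p. (1/2) * (sqrtv p \<bullet> (sym_part V *v sqrtv p))) (at q) v
                 = pullback_form (sym_part V) q v))
       \<and> (\<exists>\<gamma>. is_2form \<gamma> \<and>
            (\<forall>q\<in>prob_simplex. \<forall>v\<in>tangent_space.
               pullback_form (skew_part V) q v = codiff2 \<gamma> q v) \<and>
            (\<forall>q\<in>prob_simplex. \<forall>v\<in>tangent_space.
               pullback_form V q v
                 = frechet_derivative (\<lambda>p. (1/2) * (sqrtv p \<bullet> (sym_part V *v sqrtv p))) (at q) v
                   + codiff2 \<gamma> q v))"
proof -
  let ?S = "sym_part V" and ?F = "skew_part V"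
  let ?U = "\<lambda>p. (1/2) * (sqrtv p \<bullet> (?S *v sqrtv p))"
  have sym: "transpose ?S = ?S"
    by (simp add: sym_part_def vec_eq_iff transpose_def)
  have skew: "?F$a$b = - ?F$b$a" for a b
    by (simp add: skew_part_def transpose_def algebra_simps)
  have V_eq: "V = ?S + ?F"
    by (simp add: sym_part_def skew_part_def vec_eq_iff field_simps)
  have U_deriv: "(?U has_derivative (\<lambda>v. (\<chi> i. v$i / (2 * sqrt (q$i))) \<bullet> (?S *v sqrtv q))) (at q)"
    if "q \<in> prob_simplex" for q
    using that by (intro sqrt_quadratic_form_has_derivative[OF sym]) (simp add: prob_simplex_def)
  have dU: "frechet_derivative ?U (at q) v = pullback_form ?S q v"
    if "q \<in> prob_simplex" "v \<in> tangent_space" for q v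
    using that frechet_derivative_at[OF U_deriv[OF that(1)], symmetric]
    by (simp add: pullback_form_tangent prob_simplex_def)
  have codiff: "pullback_form ?F q v = codiff2 (codiff_potential ?F) q v"
    if "q \<in> prob_simplex" "v \<in> tangent_space" for q v
    using that by (simp add: pullback_form_chart codiff2_codiff_potential[OF _ skew assms])
  show ?thesis
  proof (intro conjI ballI exI[of _ "codiff_potential ?F"])
    fix q v :: "real^'m option" assume "q \<in> prob_simplex" "v \<in> tangent_space"
    with dU codiff
    show "pullback_form V q v = frechet_derivative ?U (at q) v + codiff2 (codiff_potential ?F) q v"
      by (subst (1) V_eq) (simp only: pullback_form_add)
  qed (use U_deriv dU codiff is_2form_codiff_potential[OF skew] in \<open>auto simp: differentiable_def\<close>)
qed
end
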